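(* Let $N\in\mathbb{N}$ and let $\{x[n]\}_{n\ge 0}$ and $\{z[n]\}_{n\ge 0}$ be mutually independent sequences of i.i.d. circular complex normal random variables $\mathcal{CN}(0,1)$. Let $\rho=|\rho|e^{\jmath\theta}$ with $|\rho|\in(0,1]$, $\theta\in[0,2\pi)$, set $\bar\rho=\sqrt{1-|\rho|^2}$, and define $y[n]=\rho\, x[n]+\bar\rho\, z[n]$. Let $$J=\arg\max_{0\le n\le N-1}|x[n]|^2,\qquad |\widehat{\rho}_{\mathrm{MMIE}}|^2=\frac{|y[J]|^2}{\mathbb{E}\big[|x[J]|^2\big]}.$$ Then $|\widehat{\rho}_{\mathrm{MMIE}}|^2$ is an asymptotically unbiased estimator of $|\rho|^2$, i.e. $\mathbb{E}\big[|\widehat{\rho}_{\mathrm{MMIE}}|^2\big]\to|\rho|^2$ as $N\to\infty$, and $$\operatorname{Var}\big(|\widehat{\rho}_{\mathrm{MMIE}}|^2\big)=O\!\left(\frac{1}{H(N)}\right),$$ where $H(N)=\sum_{n=1}^N \frac1n=\log N+\gamma+O(1/N)$ is the $N$-th harmonic number ($\gamma$ the Euler–Mascheroni constant). In particular, if $N=2^k$, then $\operatorname{Var}\big(|\widehat{\rho}_{\mathrm{MMIE}}|^2\big)=O(1/k)$ as $k\to\infty$.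
   Context: $\mathcal{CN}(0,1)$ denotes the circularly-symmetric complex Gaussian distribution with zero mean and unit variance ($\mathbb{E}|x|^2=1$). $\jmath$ is the imaginary unit. The argmax is almost surely unique. *)

theory Defs
  imports "HOL-Probability.Probability" "HOL-Library.Landau_Symbols"
begin

definition cn_density :: "complex \<Rightarrow> real" where
  "cn_density w = exp (- (cmod w)\<^sup>2) / pi"

definition argmax_idx :: "(nat \<Rightarrow> 'a \<Rightarrow> complex) \<Rightarrow> nat \<Rightarrow> 'a \<Rightarrow> nat" where
  "argmax_idx x N \<omega> = (ARG_MAX (\<lambda>n. (cmod (x n \<omega>))\<^sup>2) n. n < N)"

definition mmie_est :: "'a measure \<Rightarrow> (nat \<Rightarrow> 'a \<Rightarrow> complex) \<Rightarrow> (nat \<Rightarrow> 'a \<Rightarrow> complex)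
    \<Rightarrow> nat \<Rightarrow> 'a \<Rightarrow> real" where
  "mmie_est M x y N \<omega> =
     (cmod (y (argmax_idx x N \<omega>) \<omega>))\<^sup>2 /
     (\<integral>\<omega>'. (cmod (x (argmax_idx x N \<omega>') \<omega>'))\<^sup>2 \<partial>M)"

definition var :: "'a measure \<Rightarrow> ('a \<Rightarrow> real) \<Rightarrow> real" where
  "var M X = (\<integral>\<omega>. (X \<omega> - (\<integral>\<omega>'. X \<omega>' \<partial>M))\<^sup>2 \<partial>M)"

end

theory Submission
  imports Defs
begin

(* The squared moduli |x[n]|^2, |z[n]|^2 are Exp(1): the tail of the planar Gaussian is computed
   by integrating along rays from the origin. Hence X = |x[J]|^2 is the maximum of N independent
   Exp(1) variables; its tail 1 - (1 - e^-t)^N gives E X = H(N) (so the estimator is |y[J]|^2 / H(N))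
   and E X^2 <= H(N)^2 + H(N). As J depends only on the x[n], Z = |z[J]|^2 is again Exp(1) and
   independent of X. Writing |y[J]|^2 = |rho|^2 X + (1 - |rho|^2) Z + C, Cauchy-Schwarz gives
   C^2 <= 4 X Z; AM-GM then bounds |E C| by 2 sqrt(H(N)), and the second moments bound the
   variance by 18 / H(N). Finally H(2^k) >= k ln 2. *)

section \<open>The squared modulus of a standard complex Gaussian\<close>

lemma distr_lborel_complex_Re_Im:
  "distr lborel borel (\<lambda>w::complex. (Re w, Im w)) = (lborel :: (real \<times> real) measure)"
proof (rule lborel_eqI[symmetric])
  fix l u :: "real \<times> real"
  assume lu: "\<And>b. b \<in> Basis \<Longrightarrow> l \<bullet> b \<le> u \<bullet> b"
  have le: "fst l \<le> fst u" "snd l \<le> snd u"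
    using lu[of "(1,0)"] lu[of "(0,1)"] by (cases l; cases u; simp add: Basis_prod_def)+
  have "(\<lambda>w::complex. (Re w, Im w)) -` box l u = box (Complex (fst l) (snd l)) (Complex (fst u) (snd u))"
    by (auto simp: box_def Basis_prod_def Basis_complex_def inner_complex_def inner_prod_def)
  then have "emeasure (distr lborel borel (\<lambda>w::complex. (Re w, Im w))) (box l u)
      = emeasure lborel (box (Complex (fst l) (snd l)) (Complex (fst u) (snd u)))"
    by (subst emeasure_distr) auto
  also have "\<dots> = ennreal ((fst u - fst l) * (snd u - snd l))"
    using le by (simp add: emeasure_lborel_box_eq Basis_complex_def inner_complex_def)
  also have "\<dots> = ennreal (prod ((\<bullet>) (u - l)) Basis)"
    by (simp add: Basis_prod_def prod.union_disjoint inner_prod_def prod.reindex inj_on_def mult.commute)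
  finally show "emeasure (distr lborel borel (\<lambda>w::complex. (Re w, Im w))) (box l u)
      = ennreal (prod ((\<bullet>) (u - l)) Basis)" .
qed simp

lemma nn_integral_lborel_complex:
  assumes [measurable]: "f \<in> borel_measurable (borel :: (real \<times> real) measure)"
  shows "(\<integral>\<^sup>+w. f (Re w, Im w) \<partial>(lborel::complex measure)) = (\<integral>\<^sup>+a. \<integral>\<^sup>+b. f (a, b) \<partial>lborel \<partial>lborel)"
proof -
  have "(\<integral>\<^sup>+w. f (Re w, Im w) \<partial>(lborel::complex measure))
      = (\<integral>\<^sup>+p. f p \<partial>distr lborel borel (\<lambda>w::complex. (Re w, Im w)))"
    by (subst nn_integral_distr) auto
  also have "\<dots> = (\<integral>\<^sup>+p. f p \<partial>(lborel \<Otimes>\<^sub>M lborel))"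
    by (simp add: distr_lborel_complex_Re_Im lborel_prod)
  also have "\<dots> = (\<integral>\<^sup>+a. \<integral>\<^sup>+b. f (a, b) \<partial>lborel \<partial>lborel)"
    by (rule lborel.nn_integral_fst[symmetric]) (simp add: lborel_prod)
  finally show ?thesis .
qed

lemma nn_integral_lborel_even:
  fixes f :: "real \<Rightarrow> ennreal"
  assumes [measurable]: "f \<in> borel_measurable borel" and even: "\<And>x. f (- x) = f x"
  shows "(\<integral>\<^sup>+x. f x \<partial>lborel) = 2 * (\<integral>\<^sup>+x. f x * indicator {0<..} x \<partial>lborel)"
proof -
  have "(\<integral>\<^sup>+x. f x \<partial>lborel) = (\<integral>\<^sup>+x. f x * indicator {0<..} x + f x * indicator {..<0} x \<partial>lborel)"
    by (intro nn_integral_cong_AE AE_I[where N="{0}"]) (auto split: split_indicator)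
  also have "\<dots> = (\<integral>\<^sup>+x. f x * indicator {0<..} x \<partial>lborel) + (\<integral>\<^sup>+x. f x * indicator {..<0} x \<partial>lborel)"
    by (rule nn_integral_add) auto
  also have "(\<integral>\<^sup>+x. f x * indicator {..<0} x \<partial>lborel)
      = (\<integral>\<^sup>+x. f (0 + (-1) * x) * indicator {..<0} (0 + (-1) * x) \<partial>lborel)"
    by (subst nn_integral_real_affine[where c="-1" and t=0]) auto
  also have "\<dots> = (\<integral>\<^sup>+x. f x * indicator {0<..} x \<partial>lborel)"
    by (intro nn_integral_cong) (auto simp: even split: split_indicator)
  finally show ?thesis by (simp add: mult_2)
qed

lemma nn_integral_gaussian_ray_tail:
  fixes t c :: real
  assumes t: "0 \<le> t" and c: "0 < c"
  shows "(\<integral>\<^sup>+a. ennreal (a * (if t < a\<^sup>2 * c then exp (- (a\<^sup>2 * c)) else 0)) * indicator {0<..} a \<partial>lborel)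
      = ennreal (exp (- t) / (2 * c))"
proof -
  define r where "r = sqrt (t / c)"
  have r: "0 \<le> r" "r\<^sup>2 = t / c" using t c by (auto simp: r_def)
  have beyond_r: "0 < a \<and> t < a\<^sup>2 * c \<longleftrightarrow> r < a" for a
  proof
    assume "0 < a \<and> t < a\<^sup>2 * c"
    then have "r\<^sup>2 < a\<^sup>2" "0 < a" using r c by (auto simp: field_simps)
    then show "r < a" using r by (smt (verit) power_mono)
  next
    assume "r < a"
    then have "r\<^sup>2 < a\<^sup>2" "0 < a" using r(1) by (auto intro!: power_strict_mono)
    then show "0 < a \<and> t < a\<^sup>2 * c" using r c by (auto simp: field_simps)
  qed
  have "(\<integral>\<^sup>+a. ennreal (a * (if t < a\<^sup>2 * c then exp (- (a\<^sup>2 * c)) else 0)) * indicator {0<..} a \<partial>lborel)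
      = (\<integral>\<^sup>+a. ennreal (a * exp (- (a\<^sup>2 * c))) * indicator {r..} a \<partial>lborel)"
  proof (rule nn_integral_cong_AE)
    show "AE a in lborel. ennreal (a * (if t < a\<^sup>2 * c then exp (- (a\<^sup>2 * c)) else 0)) * indicator {0<..} a
        = ennreal (a * exp (- (a\<^sup>2 * c))) * indicator {r..} a"
      using AE_lborel_singleton[of r]
    proof eventually_elim
      case (elim a)
      then show ?case using beyond_r[of a] by (cases "r < a") (auto split: split_indicator)
    qed
  qed
  also have "\<dots> = ennreal (0 - (- exp (- (r\<^sup>2 * c)) / (2 * c)))"
  proof (rule nn_integral_FTC_atLeast)
    have "filterlim (\<lambda>a::real. a\<^sup>2 * c) at_top at_top"
      using filterlim_tendsto_pos_mult_at_top[OF tendsto_const c filterlim_pow_at_top[OF pos2 filterlim_ident]]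
      by (simp add: mult.commute)
    then have "((\<lambda>a::real. - exp (- (a\<^sup>2 * c)) / (2 * c)) \<longlongrightarrow> - 0 / (2 * c)) at_top"
      using c by (intro tendsto_intros filterlim_compose[OF exp_at_bot]
          filterlim_compose[OF filterlim_uminus_at_bot_at_top]) auto
    then show "((\<lambda>a. - exp (- (a\<^sup>2 * c)) / (2 * c)) \<longlongrightarrow> 0) at_top" by simp
    show "((\<lambda>a. - exp (- (a\<^sup>2 * c)) / (2 * c)) has_real_derivative a * exp (- (a\<^sup>2 * c))) (at a)" for a
      using c by (auto intro!: derivative_eq_intros simp: field_simps power2_eq_square)
  qed (use r in auto)
  also have "\<dots> = ennreal (exp (- t) / (2 * c))" using r c by simp
  finally show ?thesis .
qed

lemma nn_integral_inverse_one_plus_square: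
  "(\<integral>\<^sup>+s. ennreal (1 / (1 + s\<^sup>2)) * indicator {0<..} s \<partial>lborel) = ennreal (pi / 2)"
proof -
  have "(\<integral>\<^sup>+s. ennreal (1 / (1 + s\<^sup>2)) * indicator {0<..} s \<partial>lborel)
      = (\<integral>\<^sup>+s. ennreal (1 / (1 + s\<^sup>2)) * indicator {0..} s \<partial>lborel)"
    using AE_lborel_singleton[of 0]
    by (intro nn_integral_cong_AE) (auto elim!: eventually_mono simp: indicator_def)
  also have "\<dots> = ennreal (pi / 2 - arctan 0)"
  proof (rule nn_integral_FTC_atLeast)
    show "(arctan has_real_derivative 1 / (1 + s\<^sup>2)) (at s)" for s
      using DERIV_arctan[of s] by (simp add: divide_inverse)
  qed (auto intro: tendsto_arctan_at_top)
  finally show ?thesis by simp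
qed

lemma nn_integral_pos_half_line_scale:
  fixes g :: "real \<Rightarrow> ennreal" and a :: real
  assumes [measurable]: "g \<in> borel_measurable borel" and a: "0 < a"
  shows "(\<integral>\<^sup>+b. g b * indicator {0<..} b \<partial>lborel) = ennreal a * (\<integral>\<^sup>+s. g (a * s) * indicator {0<..} s \<partial>lborel)"
proof -
  have "(\<integral>\<^sup>+b. g b * indicator {0<..} b \<partial>lborel)
      = ennreal \<bar>a\<bar> * (\<integral>\<^sup>+s. g (0 + a * s) * indicator {0<..} (0 + a * s) \<partial>lborel)"
    using a by (intro nn_integral_real_affine) auto
  then show ?thesis
    using a by (simp add: zero_less_mult_iff indicator_def)
qed

lemma nn_integral_gaussian_slope_tail:
  fixes t s :: real
  assumes t: "0 \<le> t"
  shows "(\<integral>\<^sup>+a. ennreal (a * (if t < a\<^sup>2 + (a * s)\<^sup>2 then exp (- (a\<^sup>2 + (a * s)\<^sup>2)) else 0))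
            * indicator {0<..} a \<partial>lborel)
      = ennreal (exp (- t) / 2) * ennreal (1 / (1 + s\<^sup>2))"
proof -
  have c: "0 < 1 + s\<^sup>2" by (simp add: add_pos_nonneg)
  have "a\<^sup>2 + (a * s)\<^sup>2 = a\<^sup>2 * (1 + s\<^sup>2)" for a :: real
    by (simp add: algebra_simps power2_eq_square)
  then have "(\<integral>\<^sup>+a. ennreal (a * (if t < a\<^sup>2 + (a * s)\<^sup>2 then exp (- (a\<^sup>2 + (a * s)\<^sup>2)) else 0))
            * indicator {0<..} a \<partial>lborel) = ennreal (exp (- t) / (2 * (1 + s\<^sup>2)))"
    by (simp add: nn_integral_gaussian_ray_tail[OF t c] cong: if_cong)
  also have "\<dots> = ennreal (exp (- t) / 2 * (1 / (1 + s\<^sup>2)))"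
    by simp
  also have "\<dots> = ennreal (exp (- t) / 2) * ennreal (1 / (1 + s\<^sup>2))"
    using c by (intro ennreal_mult) auto
  finally show ?thesis .
qed

text \<open>The substitution \<open>b = a s\<close> turns the quadrant into a family of rays of slope \<open>s\<close>.\<close>
lemma nn_integral_quadrant_gaussian_tail:
  fixes t :: real
  assumes t: "0 \<le> t"
  shows "(\<integral>\<^sup>+a. (\<integral>\<^sup>+b. ennreal (if t < a\<^sup>2 + b\<^sup>2 then exp (- (a\<^sup>2 + b\<^sup>2)) else 0)
            * indicator {0<..} b \<partial>lborel) * indicator {0<..} a \<partial>lborel)
      = ennreal (pi * exp (- t) / 4)"
proof -
  define q where "q a b = (if t < a\<^sup>2 + b\<^sup>2 then exp (- (a\<^sup>2 + b\<^sup>2)) else 0)" for a b :: real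
  have q_nonneg: "0 \<le> q a b" for a b by (simp add: q_def)
  have "(\<integral>\<^sup>+a. (\<integral>\<^sup>+b. ennreal (q a b) * indicator {0<..} b \<partial>lborel) * indicator {0<..} a \<partial>lborel)
      = (\<integral>\<^sup>+a. \<integral>\<^sup>+s. ennreal (a * q a (a * s)) * indicator {0<..} s * indicator {0<..} a \<partial>lborel \<partial>lborel)"
  proof (rule nn_integral_cong)
    fix a :: real
    show "(\<integral>\<^sup>+b. ennreal (q a b) * indicator {0<..} b \<partial>lborel) * indicator {0<..} a
        = (\<integral>\<^sup>+s. ennreal (a * q a (a * s)) * indicator {0<..} s * indicator {0<..} a \<partial>lborel)"
    proof (cases "0 < a")
      case True
      have "(\<integral>\<^sup>+b. ennreal (q a b) * indicator {0<..} b \<partial>lborel)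
          = ennreal a * (\<integral>\<^sup>+s. ennreal (q a (a * s)) * indicator {0<..} s \<partial>lborel)"
        using True by (intro nn_integral_pos_half_line_scale) (auto simp: q_def)
      also have "\<dots> = (\<integral>\<^sup>+s. ennreal (a * q a (a * s)) * indicator {0<..} s \<partial>lborel)"
        using True q_nonneg by (subst nn_integral_cmult[symmetric]) (auto simp: ennreal_mult mult.assoc q_def)
      finally show ?thesis using True by simp
    qed simp
  qed
  also have "\<dots> = (\<integral>\<^sup>+s. \<integral>\<^sup>+a. ennreal (a * q a (a * s)) * indicator {0<..} s * indicator {0<..} a \<partial>lborel \<partial>lborel)"
    by (rule lborel_pair.Fubini') (unfold q_def, measurable)
  also have "\<dots> = (\<integral>\<^sup>+s. ennreal (exp (- t) / 2) * (ennreal (1 / (1 + s\<^sup>2)) * indicator {0<..} s) \<partial>lborel)"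
  proof (rule nn_integral_cong)
    fix s :: real
    have "(\<integral>\<^sup>+a. ennreal (a * q a (a * s)) * indicator {0<..} s * indicator {0<..} a \<partial>lborel)
        = (\<integral>\<^sup>+a. ennreal (a * q a (a * s)) * indicator {0<..} a \<partial>lborel) * indicator {0<..} s"
      by (subst nn_integral_multc[symmetric]) (auto simp: q_def intro!: nn_integral_cong split: split_indicator)
    then show "(\<integral>\<^sup>+a. ennreal (a * q a (a * s)) * indicator {0<..} s * indicator {0<..} a \<partial>lborel)
        = ennreal (exp (- t) / 2) * (ennreal (1 / (1 + s\<^sup>2)) * indicator {0<..} s)"
      by (simp add: q_def nn_integral_gaussian_slope_tail[OF t] mult.assoc)
  qed
  also have "\<dots> = ennreal (exp (- t) / 2) * ennreal (pi / 2)"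
    by (simp add: nn_integral_cmult nn_integral_inverse_one_plus_square)
  also have "\<dots> = ennreal (pi * exp (- t) / 4)"
    by (simp add: ennreal_mult[symmetric])
  finally show ?thesis by (simp add: q_def)
qed

lemma nn_integral_gaussian_plane_tail:
  fixes t :: real
  assumes t: "0 \<le> t"
  shows "(\<integral>\<^sup>+a. \<integral>\<^sup>+b. ennreal (if t < a\<^sup>2 + b\<^sup>2 then exp (- (a\<^sup>2 + b\<^sup>2)) else 0) \<partial>lborel \<partial>lborel)
      = ennreal (pi * exp (- t))"
proof -
  define q where "q a b = (if t < a\<^sup>2 + b\<^sup>2 then exp (- (a\<^sup>2 + b\<^sup>2)) else 0)" for a b :: real
  define K where "K a = (\<integral>\<^sup>+b. ennreal (q a b) * indicator {0<..} b \<partial>lborel)" for a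
  have [measurable]: "K \<in> borel_measurable borel"
    unfolding K_def q_def by measurable
  have "(\<integral>\<^sup>+a. \<integral>\<^sup>+b. ennreal (q a b) \<partial>lborel \<partial>lborel) = (\<integral>\<^sup>+a. 2 * K a \<partial>lborel)"
    unfolding K_def by (intro nn_integral_cong nn_integral_lborel_even) (auto simp: q_def)
  also have "\<dots> = 2 * (\<integral>\<^sup>+a. K a \<partial>lborel)"
    by (rule nn_integral_cmult) simp
  also have "(\<integral>\<^sup>+a. K a \<partial>lborel) = 2 * (\<integral>\<^sup>+a. K a * indicator {0<..} a \<partial>lborel)"
    by (rule nn_integral_lborel_even) (auto simp: K_def q_def power2_minus cong: if_cong)
  also have "(\<integral>\<^sup>+a. K a * indicator {0<..} a \<partial>lborel) = ennreal (pi * exp (- t) / 4)"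
    unfolding K_def q_def by (rule nn_integral_quadrant_gaussian_tail[OF t])
  also have "2 * (2 * ennreal (pi * exp (- t) / 4)) = ennreal 4 * ennreal (pi * exp (- t) / 4)"
    by (simp add: mult.assoc[symmetric])
  also have "\<dots> = ennreal (pi * exp (- t))"
    by (subst ennreal_mult[symmetric]) auto
  finally show ?thesis by (simp add: q_def)
qed

lemma emeasure_cn_norm_sq_greater:
  fixes t :: real
  assumes t: "0 \<le> t"
  shows "emeasure (density lborel (\<lambda>w. ennreal (cn_density w))) {w. t < (cmod w)\<^sup>2} = ennreal (exp (- t))"
proof -
  define q where "q p = (if t < (fst p)\<^sup>2 + (snd p)\<^sup>2 then exp (- ((fst p)\<^sup>2 + (snd p)\<^sup>2)) else 0)"
    for p :: "real \<times> real"
  have "emeasure (density lborel (\<lambda>w. ennreal (cn_density w))) {w. t < (cmod w)\<^sup>2}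
      = (\<integral>\<^sup>+w. ennreal (1 / pi) * ennreal (q (Re w, Im w)) \<partial>lborel)"
    by (subst emeasure_density)
      (auto intro!: nn_integral_cong simp: cn_density_def q_def cmod_def ennreal_mult[symmetric]
        split: split_indicator)
  also have "\<dots> = ennreal (1 / pi) * (\<integral>\<^sup>+w. ennreal (q (Re w, Im w)) \<partial>lborel)"
    by (rule nn_integral_cmult) (simp add: q_def)
  also have "(\<integral>\<^sup>+w. ennreal (q (Re w, Im w)) \<partial>lborel) = (\<integral>\<^sup>+a. \<integral>\<^sup>+b. ennreal (q (a, b)) \<partial>lborel \<partial>lborel)"
    by (rule nn_integral_lborel_complex) (unfold q_def, subst borel_prod[symmetric], measurable)
  also have "\<dots> = ennreal (pi * exp (- t))"
    using nn_integral_gaussian_plane_tail[OF t] by (simp add: q_def cong: if_cong)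
  also have "ennreal (1 / pi) * ennreal (pi * exp (- t)) = ennreal (exp (- t))"
    by (simp add: ennreal_mult[symmetric])
  finally show ?thesis .
qed

lemma (in prob_space) distributed_cn_norm_sq:
  assumes X: "distributed M lborel X (\<lambda>w. ennreal (cn_density w))"
  shows "distributed M lborel (\<lambda>\<omega>. (cmod (X \<omega>))\<^sup>2) (exponential_density 1)"
proof (subst exponential_distributed_iff, safe)
  have [measurable]: "X \<in> borel_measurable M"
    using distributed_measurable[OF X] by simp
  show "(\<lambda>\<omega>. (cmod (X \<omega>))\<^sup>2) \<in> borel_measurable M" by measurable
  fix a :: real assume a: "0 \<le> a"
  have "emeasure M {\<omega>\<in>space M. a < (cmod (X \<omega>))\<^sup>2} = emeasure (distr M lborel X) {w. a < (cmod w)\<^sup>2}"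
    by (subst emeasure_distr) (auto intro!: arg_cong[where f="emeasure M"])
  also have "\<dots> = ennreal (exp (- a))"
    unfolding distributed_distr_eq_density[OF X] by (rule emeasure_cn_norm_sq_greater[OF a])
  finally have "\<P>(\<omega> in M. a < (cmod (X \<omega>))\<^sup>2) = exp (- a)"
    by (simp add: emeasure_eq_measure)
  moreover have "\<P>(\<omega> in M. (cmod (X \<omega>))\<^sup>2 \<le> a) = 1 - \<P>(\<omega> in M. a < (cmod (X \<omega>))\<^sup>2)"
    by (subst prob_compl[symmetric]) (auto intro!: arg_cong[where f=prob])
  ultimately show "\<P>(\<omega> in M. (cmod (X \<omega>))\<^sup>2 \<le> a) = 1 - exp (- a * 1)" by simp
qed simp

section \<open>Arg max over an initial segment\<close>

lemma arg_max_lessThan: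
  fixes f :: "nat \<Rightarrow> 'b::linorder"
  assumes "0 < N"
  shows "(ARG_MAX f m. m < N) < N" and "\<And>m. m < N \<Longrightarrow> f m \<le> f (ARG_MAX f m. m < N)"
proof -
  have "Max (f ` {..<N}) \<in> f ` {..<N}" using assms by (intro Max_in) auto
  then obtain n where n: "n < N" "f n = Max (f ` {..<N})" by auto
  then have "is_arg_max f (\<lambda>m. m < N) n"
    by (auto simp: is_arg_max_linorder)
  then have "is_arg_max f (\<lambda>m. m < N) (ARG_MAX f m. m < N)"
    unfolding arg_max_def by (rule someI)
  then show "(ARG_MAX f m. m < N) < N" "\<And>m. m < N \<Longrightarrow> f m \<le> f (ARG_MAX f m. m < N)"
    by (auto simp: is_arg_max_linorder)
qed

lemma arg_max_lessThan_cong: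
  assumes "\<And>m. m < N \<Longrightarrow> f m = g m"
  shows "(ARG_MAX f m. m < N) = (ARG_MAX g m. m < N)"
  unfolding arg_max_def is_arg_max_def
  by (rule arg_cong[where f=Eps]) (auto simp: fun_eq_iff assms)

lemma maximisers_lessThan_eq_iff:
  fixes f :: "nat \<Rightarrow> 'b::linorder"
  assumes A: "A \<subseteq> {..<N}"
  shows "{n. n < N \<and> (\<forall>m<N. f m \<le> f n)} = A \<longleftrightarrow>
    (\<forall>n\<in>A. \<forall>m\<in>{..<N}. f m \<le> f n) \<and> (\<forall>n\<in>{..<N} - A. \<exists>m\<in>{..<N}. f n < f m)"
proof
  assume "{n. n < N \<and> (\<forall>m<N. f m \<le> f n)} = A"
  then have A_eq: "A = {n. n < N \<and> (\<forall>m<N. f m \<le> f n)}" ..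
  show "(\<forall>n\<in>A. \<forall>m\<in>{..<N}. f m \<le> f n) \<and> (\<forall>n\<in>{..<N} - A. \<exists>m\<in>{..<N}. f n < f m)"
    unfolding A_eq by (auto simp: not_le)
next
  assume max: "(\<forall>n\<in>A. \<forall>m\<in>{..<N}. f m \<le> f n) \<and> (\<forall>n\<in>{..<N} - A. \<exists>m\<in>{..<N}. f n < f m)"
  show "{n. n < N \<and> (\<forall>m<N. f m \<le> f n)} = A"
  proof (intro set_eqI iffI)
    fix n assume "n \<in> {n. n < N \<and> (\<forall>m<N. f m \<le> f n)}"
    then have n: "n < N" "\<And>m. m < N \<Longrightarrow> f m \<le> f n" by auto
    show "n \<in> A"
    proof (rule ccontr)
      assume "n \<notin> A"
      with n(1) max obtain m where "m \<in> {..<N}" "f n < f m" by blast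
      with n(2)[of m] show False by simp
    qed
  next
    fix n assume "n \<in> A"
    then show "n \<in> {n. n < N \<and> (\<forall>m<N. f m \<le> f n)}" using max A by auto
  qed
qed

text \<open>The arg max is a fixed choice function applied to the set of maximisers, which
  takes only finitely many values.\<close>
lemma measurable_arg_max_lessThan:
  fixes f :: "nat \<Rightarrow> 'a \<Rightarrow> real"
  assumes [measurable]: "\<And>m. f m \<in> borel_measurable M"
  shows "(\<lambda>\<omega>. ARG_MAX (\<lambda>m. f m \<omega>) m. m < N) \<in> measurable M (count_space UNIV)"
proof -
  define S where "S \<omega> = {n. n < N \<and> (\<forall>m<N. f m \<omega> \<le> f n \<omega>)}" for \<omega>
  have arg_max_eq: "(\<lambda>\<omega>. ARG_MAX (\<lambda>m. f m \<omega>) m. m < N) = (\<lambda>A. Eps (\<lambda>n. n \<in> A)) \<circ> S"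
    unfolding arg_max_def is_arg_max_linorder S_def by (auto simp: fun_eq_iff)
  have "S \<in> measurable M (count_space (Pow {..<N}))"
  proof (subst measurable_count_space_eq2, safe)
    fix A assume A: "A \<subseteq> {..<N}"
    have "S \<omega> = A \<longleftrightarrow> (\<forall>n\<in>A. \<forall>m\<in>{..<N}. f m \<omega> \<le> f n \<omega>)
        \<and> (\<forall>n\<in>{..<N} - A. \<exists>m\<in>{..<N}. f n \<omega> < f m \<omega>)" for \<omega>
      unfolding S_def by (rule maximisers_lessThan_eq_iff[OF A])
    then have "S -` {A} \<inter> space M = {\<omega>\<in>space M. (\<forall>n\<in>A. \<forall>m\<in>{..<N}. f m \<omega> \<le> f n \<omega>)
        \<and> (\<forall>n\<in>{..<N} - A. \<exists>m\<in>{..<N}. f n \<omega> < f m \<omega>)}"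
      by blast
    also have "\<dots> \<in> sets M"
      using finite_subset[OF A] by measurable
    finally show "S -` {A} \<inter> space M \<in> sets M" .
  qed (auto simp: S_def)
  then show ?thesis
    unfolding arg_max_eq by (rule measurable_comp) simp
qed

section \<open>The maximum of independent exponential variables\<close>

lemma (in sigma_finite_measure) nn_integral_layer_cake:
  fixes X :: "'a \<Rightarrow> real" and h :: "real \<Rightarrow> ennreal"
  assumes [measurable]: "X \<in> borel_measurable M" "h \<in> borel_measurable borel"
  shows "(\<integral>\<^sup>+\<omega>. (\<integral>\<^sup>+t. h t * indicator {0..<X \<omega>} t \<partial>lborel) \<partial>M)
       = (\<integral>\<^sup>+t. h t * indicator {0..} t * emeasure M {\<omega>\<in>space M. t < X \<omega>} \<partial>lborel)"
proof -
  interpret pair_sigma_finite M lborel ..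
  have "(\<integral>\<^sup>+\<omega>. (\<integral>\<^sup>+t. h t * indicator {0..<X \<omega>} t \<partial>lborel) \<partial>M)
      = (\<integral>\<^sup>+t. (\<integral>\<^sup>+\<omega>. h t * indicator {0..<X \<omega>} t \<partial>M) \<partial>lborel)"
  proof (rule Fubini'[symmetric])
    have [measurable]: "Measurable.pred (M \<Otimes>\<^sub>M lborel) (\<lambda>p. 0 \<le> snd p \<and> snd p < X (fst p))"
      by measurable
    show "(\<lambda>(\<omega>, t). h t * indicator {0..<X \<omega>} t) \<in> borel_measurable (M \<Otimes>\<^sub>M lborel)"
      unfolding split_beta' indicator_def atLeastLessThan_iff by measurable
  qed
  also have "\<dots> = (\<integral>\<^sup>+t. h t * indicator {0..} t * emeasure M {\<omega>\<in>space M. t < X \<omega>} \<partial>lborel)"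
  proof (rule nn_integral_cong)
    fix t :: real
    have "(\<integral>\<^sup>+\<omega>. h t * indicator {0..<X \<omega>} t \<partial>M)
        = (\<integral>\<^sup>+\<omega>. (h t * indicator {0..} t) * indicator {\<omega>\<in>space M. t < X \<omega>} \<omega> \<partial>M)"
      by (intro nn_integral_cong) (auto split: split_indicator)
    also have "\<dots> = h t * indicator {0..} t * emeasure M {\<omega>\<in>space M. t < X \<omega>}"
      by (rule nn_integral_cmult_indicator) measurable
    finally show "(\<integral>\<^sup>+\<omega>. h t * indicator {0..<X \<omega>} t \<partial>M)
        = h t * indicator {0..} t * emeasure M {\<omega>\<in>space M. t < X \<omega>}" .
  qed
  finally show ?thesis .
qed

lemma nn_integral_two_times_Ico:
  fixes x :: real
  assumes "0 \<le> x"
  shows "(\<integral>\<^sup>+t. ennreal (2 * t) * indicator {0..<x} t \<partial>lborel) = ennreal (x\<^sup>2)"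
proof -
  have "(\<integral>\<^sup>+t. ennreal (2 * t) * indicator {0..<x} t \<partial>lborel)
      = (\<integral>\<^sup>+t. ennreal (2 * t) * indicator {0..x} t \<partial>lborel)"
    using AE_lborel_singleton[of x]
    by (intro nn_integral_cong_AE) (auto elim!: eventually_mono split: split_indicator)
  also have "\<dots> = x\<^sup>2 - 0\<^sup>2"
    by (rule nn_integral_FTC_Icc) (use assms in \<open>auto intro!: derivative_eq_intros\<close>)
  finally show ?thesis by simp
qed

lemma one_minus_power_eq_sum:
  fixes q :: "'a::comm_ring_1"
  shows "1 - (1 - q) ^ n = (\<Sum>k<n. q * (1 - q) ^ k)"
  by (simp add: one_diff_power_eq sum_distrib_left)

lemma tendsto_one_minus_exp_neg_at_top: "((\<lambda>t::real. 1 - exp (- t)) \<longlongrightarrow> 1) at_top"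
proof -
  have "((\<lambda>t::real. 1 - exp (- t)) \<longlongrightarrow> 1 - 0) at_top"
    by (intro tendsto_intros filterlim_compose[OF exp_at_bot] filterlim_uminus_at_bot_at_top)
  then show ?thesis by simp
qed

lemma DERIV_one_minus_exp_neg_power:
  "((\<lambda>t. (1 - exp (- t)) ^ Suc k) has_real_derivative real (Suc k) * (exp (- x) * (1 - exp (- x)) ^ k)) (at x)"
proof -
  have "((\<lambda>t. (1 - exp (- t)) ^ Suc k) has_real_derivative (1 + real k) * (exp (- x) * (1 - exp (- x)) ^ k)) (at x)"
    by (rule DERIV_power_Suc) (auto intro!: derivative_eq_intros)
  then show ?thesis by simp
qed

lemma exp_neg_mult_power_nonneg: "0 \<le> t \<Longrightarrow> 0 \<le> exp (- t) * (1 - exp (- t :: real)) ^ k"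
  by (intro mult_nonneg_nonneg zero_le_power) auto

lemma nn_integral_exp_neg_mult_power:
  "(\<integral>\<^sup>+t. ennreal (exp (- t) * (1 - exp (- t)) ^ k) * indicator {0..} t \<partial>lborel) = ennreal (1 / real (Suc k))"
proof -
  have "(\<integral>\<^sup>+t. ennreal (exp (- t) * (1 - exp (- t)) ^ k) * indicator {0..} t \<partial>lborel)
      = ennreal (1 / real (Suc k) - (1 - exp (- 0)) ^ Suc k / real (Suc k))"
  proof (rule nn_integral_FTC_atLeast)
    show "((\<lambda>t. (1 - exp (- t)) ^ Suc k / real (Suc k)) \<longlongrightarrow> 1 / real (Suc k)) at_top"
      using tendsto_divide[OF tendsto_power[OF tendsto_one_minus_exp_neg_at_top, of "Suc k"]
          tendsto_const[of "real (Suc k)"]]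
      by simp
    show "((\<lambda>t. (1 - exp (- t)) ^ Suc k / real (Suc k)) has_real_derivative exp (- x) * (1 - exp (- x)) ^ k) (at x)"
      for x :: real
      by (rule DERIV_cong[OF DERIV_cdivide[OF DERIV_one_minus_exp_neg_power]]) simp
  qed auto
  then show ?thesis by simp
qed

lemma nn_integral_max_exponential_tail:
  "(\<integral>\<^sup>+t. ennreal (1 - (1 - exp (- t)) ^ N) * indicator {0..} t \<partial>lborel) = ennreal (harm N)"
proof -
  have "(\<integral>\<^sup>+t. ennreal (1 - (1 - exp (- t)) ^ N) * indicator {0..} t \<partial>lborel)
      = (\<integral>\<^sup>+t. (\<Sum>k<N. ennreal (exp (- t) * (1 - exp (- t)) ^ k) * indicator {0..} t) \<partial>lborel)"
    using exp_neg_mult_power_nonneg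
    by (intro nn_integral_cong)
      (auto simp: one_minus_power_eq_sum sum_distrib_right sum_ennreal lessThan_def split: split_indicator)
  also have "\<dots> = (\<Sum>k<N. ennreal (1 / real (Suc k)))"
    by (subst nn_integral_sum) (auto simp: nn_integral_exp_neg_mult_power)
  also have "\<dots> = ennreal (harm N)"
    by (simp add: harm_altdef sum_ennreal divide_inverse del: of_nat_Suc)
  finally show ?thesis .
qed

lemma tendsto_mult_max_exponential_tail:
  "((\<lambda>t::real. t * (1 - (1 - exp (- t)) ^ n)) \<longlongrightarrow> 0) at_top"
proof (rule tendsto_sandwich)
  have bound: "1 - (1 - exp (- t)) ^ n \<le> n * exp (- t)" if "0 \<le> t" for t :: real
  proof -
    have "1 - (1 - exp (- t)) ^ n = (\<Sum>k<n. exp (- t) * (1 - exp (- t)) ^ k)"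
      by (rule one_minus_power_eq_sum)
    also have "\<dots> \<le> (\<Sum>k<n. exp (- t))"
      using that by (intro sum_mono) (auto intro!: mult_left_le power_le_one)
    finally show ?thesis by simp
  qed
  show "\<forall>\<^sub>F t in at_top. (0::real) \<le> t * (1 - (1 - exp (- t)) ^ n)"
    using eventually_ge_at_top[of "0::real"]
    by eventually_elim (simp add: power_le_one)
  show "\<forall>\<^sub>F t in at_top. t * (1 - (1 - exp (- t)) ^ n) \<le> n * (t ^ 1 / exp t)"
    using eventually_ge_at_top[of "0::real"]
  proof eventually_elim
    case (elim t)
    have "t * (1 - (1 - exp (- t)) ^ n) \<le> t * (n * exp (- t))"
      using bound[OF elim] elim by (rule mult_left_mono)
    then show ?case by (simp add: exp_minus field_simps)
  qed
  show "((\<lambda>t::real. n * (t ^ 1 / exp t)) \<longlongrightarrow> 0) at_top"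
    using tendsto_mult[OF tendsto_const[of "real n"] tendsto_power_div_exp_0[of 1]] by simp
qed simp

lemma nn_integral_t_exp_neg_mult_power:
  "(\<integral>\<^sup>+t. ennreal (2 * t * (exp (- t) * (1 - exp (- t)) ^ k)) * indicator {0..} t \<partial>lborel)
    = ennreal (2 * harm (Suc k) / real (Suc k))"
proof -
  define n where "n = Suc k"
  define A where "A t = (\<Sum>j<n. (1 - exp (- t)) ^ Suc j / real (Suc j))" for t :: real
  \<comment> \<open>Integration by parts: \<open>A\<close> is an antiderivative of \<open>1 - (1 - exp (- t)) ^ n\<close>.\<close>
  define F where "F t = 2 / n * (A t - t * (1 - (1 - exp (- t)) ^ n))" for t :: real
  have dA: "(A has_real_derivative 1 - (1 - exp (- x)) ^ n) (at x)" for x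
  proof -
    have "(A has_real_derivative (\<Sum>j<n. exp (- x) * (1 - exp (- x)) ^ j)) (at x)"
      unfolding A_def
      by (intro DERIV_sum DERIV_cong[OF DERIV_cdivide[OF DERIV_one_minus_exp_neg_power]])
        (simp del: of_nat_Suc)
    then show ?thesis by (simp add: one_minus_power_eq_sum)
  qed
  have dF: "(F has_real_derivative 2 * x * (exp (- x) * (1 - exp (- x)) ^ k)) (at x)" for x
    unfolding F_def n_def
    by (rule DERIV_cong, (rule dA[unfolded n_def] DERIV_one_minus_exp_neg_power derivative_intros)+)
      (simp add: field_simps)
  have "(\<integral>\<^sup>+t. ennreal (2 * t * (exp (- t) * (1 - exp (- t)) ^ k)) * indicator {0..} t \<partial>lborel)
      = ennreal (2 / n * harm n - F 0)"
  proof (rule nn_integral_FTC_atLeast)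
    have "(A \<longlongrightarrow> (\<Sum>j<n. 1 ^ Suc j / real (Suc j))) at_top"
      unfolding A_def by (intro tendsto_intros tendsto_one_minus_exp_neg_at_top) auto
    then have "(A \<longlongrightarrow> harm n) at_top"
      by (simp add: harm_altdef divide_inverse del: of_nat_Suc)
    then have "((\<lambda>t. 2 / n * (A t - t * (1 - (1 - exp (- t)) ^ n))) \<longlongrightarrow> 2 / n * (harm n - 0)) at_top"
      by (intro tendsto_mult tendsto_const tendsto_diff tendsto_mult_max_exponential_tail)
    then show "(F \<longlongrightarrow> 2 / n * harm n) at_top"
      by (simp add: F_def[abs_def])
  qed (auto intro: dF)
  also have "F 0 = 0" by (simp add: F_def A_def)
  finally show ?thesis by (simp add: n_def)
qed

lemma nn_integral_t_max_exponential_tail: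
  "(\<integral>\<^sup>+t. ennreal (2 * t * (1 - (1 - exp (- t)) ^ N)) * indicator {0..} t \<partial>lborel)
    = ennreal (\<Sum>k<N. 2 * harm (Suc k) / real (Suc k))"
proof -
  have "(\<integral>\<^sup>+t. ennreal (2 * t * (1 - (1 - exp (- t)) ^ N)) * indicator {0..} t \<partial>lborel)
      = (\<integral>\<^sup>+t. (\<Sum>k<N. ennreal (2 * t * (exp (- t) * (1 - exp (- t)) ^ k)) * indicator {0..} t) \<partial>lborel)"
    using exp_neg_mult_power_nonneg
    by (intro nn_integral_cong)
      (auto simp: one_minus_power_eq_sum sum_distrib_left sum_distrib_right sum_ennreal lessThan_def
        split: split_indicator)
  also have "\<dots> = (\<Sum>k<N. ennreal (2 * harm (Suc k) / real (Suc k)))"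
    by (subst nn_integral_sum) (auto simp: nn_integral_t_exp_neg_mult_power)
  also have "\<dots> = ennreal (\<Sum>k<N. 2 * harm (Suc k) / real (Suc k))"
    by (rule sum_ennreal) (auto intro!: divide_nonneg_nonneg harm_nonneg)
  finally show ?thesis .
qed

lemma sum_harm_div_le: "(\<Sum>k<N. 2 * harm (Suc k) / real (Suc k)) \<le> (harm N)\<^sup>2 + (harm N :: real)"
proof (induction N)
  case (Suc N)
  define u :: real where "u = 1 / real (Suc N)"
  have h: "harm (Suc N) = harm N + u" by (simp add: harm_Suc u_def divide_inverse)
  have "(\<Sum>k<Suc N. 2 * harm (Suc k) / real (Suc k)) \<le> (harm N)\<^sup>2 + harm N + 2 * (harm N + u) * u"
    using Suc by (simp add: h u_def)
  also have "\<dots> \<le> (harm N + u)\<^sup>2 + (harm N + u)"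
  proof -
    have "0 \<le> u" "u \<le> 1" by (auto simp: u_def)
    then have "u * u \<le> u" using mult_left_le_one_le[of u u] by simp
    then show ?thesis by (simp add: power2_eq_square algebra_simps)
  qed
  finally show ?case by (simp add: h)
qed (simp add: harm_expand)

lemma (in prob_space) prob_Max_exponential_greater:
  fixes V :: "'i \<Rightarrow> 'a \<Rightarrow> real"
  assumes indep: "indep_vars (\<lambda>_. borel) V I" and I: "finite I" "I \<noteq> {}"
    and exponential: "\<And>i. i \<in> I \<Longrightarrow> distributed M lborel (V i) (exponential_density 1)"
    and t: "0 \<le> t"
  shows "prob {\<omega>\<in>space M. t < Max ((\<lambda>i. V i \<omega>) ` I)} = 1 - (1 - exp (- t)) ^ card I"
proof -
  have [measurable]: "V i \<in> borel_measurable M" if "i \<in> I" for i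
    using distributed_measurable[OF exponential[OF that]] by simp
  have "prob {\<omega>\<in>space M. Max ((\<lambda>i. V i \<omega>) ` I) \<le> t} = prob (\<Inter>i\<in>I. V i -` {..t} \<inter> space M)"
    using I by (intro arg_cong[where f=prob]) auto
  also have "\<dots> = (\<Prod>i\<in>I. prob (V i -` {..t} \<inter> space M))"
    using I by (intro indep_varsD[OF indep]) auto
  also have "\<dots> = (\<Prod>i\<in>I. 1 - exp (- t))"
  proof (rule prod.cong)
    fix i assume "i \<in> I"
    then have "prob {\<omega>\<in>space M. V i \<omega> \<le> t} = 1 - exp (- t * 1)"
      using exponential_distributedD_le[OF exponential t] by simp
    then show "prob (V i -` {..t} \<inter> space M) = 1 - exp (- t)"
      by (simp add: vimage_def Int_def conj_commute)
  qed simp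
  finally have "prob {\<omega>\<in>space M. Max ((\<lambda>i. V i \<omega>) ` I) \<le> t} = (1 - exp (- t)) ^ card I"
    by simp
  moreover have "prob {\<omega>\<in>space M. t < Max ((\<lambda>i. V i \<omega>) ` I)}
      = 1 - prob {\<omega>\<in>space M. Max ((\<lambda>i. V i \<omega>) ` I) \<le> t}"
    using I by (subst prob_compl[symmetric]) (auto intro!: arg_cong[where f=prob] simp: Max_gr_iff not_le)
  ultimately show ?thesis by simp
qed

context prob_space
begin

context
  fixes X :: "'a \<Rightarrow> real" and N :: nat
  assumes X_measurable [measurable]: "X \<in> borel_measurable M"
    and X_nonneg: "\<And>\<omega>. 0 \<le> X \<omega>"
    and X_tail: "\<And>t. 0 \<le> t \<Longrightarrow> prob {\<omega>\<in>space M. t < X \<omega>} = 1 - (1 - exp (- t)) ^ N"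
begin

lemma has_bochner_integral_max_exponential: "has_bochner_integral M X (harm N)"
proof (rule has_bochner_integral_nn_integral)
  have "(\<integral>\<^sup>+\<omega>. ennreal (X \<omega>) \<partial>M) = (\<integral>\<^sup>+\<omega>. (\<integral>\<^sup>+t. 1 * indicator {0..<X \<omega>} t \<partial>lborel) \<partial>M)"
    by (intro nn_integral_cong) (simp add: X_nonneg)
  also have "\<dots> = (\<integral>\<^sup>+t. 1 * indicator {0..} t * emeasure M {\<omega>\<in>space M. t < X \<omega>} \<partial>lborel)"
    by (rule nn_integral_layer_cake) auto
  also have "\<dots> = (\<integral>\<^sup>+t. ennreal (1 - (1 - exp (- t)) ^ N) * indicator {0..} t \<partial>lborel)"
    by (intro nn_integral_cong) (simp add: emeasure_eq_measure X_tail split: split_indicator)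
  also have "\<dots> = ennreal (harm N)"
    by (rule nn_integral_max_exponential_tail)
  finally show "(\<integral>\<^sup>+\<omega>. ennreal (X \<omega>) \<partial>M) = ennreal (harm N)" .
qed (auto simp: X_nonneg harm_nonneg)

lemma has_bochner_integral_sq_max_exponential:
  "has_bochner_integral M (\<lambda>\<omega>. (X \<omega>)\<^sup>2) (\<Sum>k<N. 2 * harm (Suc k) / real (Suc k))"
proof (rule has_bochner_integral_nn_integral)
  have "(\<integral>\<^sup>+\<omega>. ennreal ((X \<omega>)\<^sup>2) \<partial>M)
      = (\<integral>\<^sup>+\<omega>. (\<integral>\<^sup>+t. ennreal (2 * t) * indicator {0..<X \<omega>} t \<partial>lborel) \<partial>M)"
    by (intro nn_integral_cong) (simp add: X_nonneg nn_integral_two_times_Ico)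
  also have "\<dots> = (\<integral>\<^sup>+t. ennreal (2 * t) * indicator {0..} t * emeasure M {\<omega>\<in>space M. t < X \<omega>} \<partial>lborel)"
    by (rule nn_integral_layer_cake) auto
  also have "\<dots> = (\<integral>\<^sup>+t. ennreal (2 * t * (1 - (1 - exp (- t)) ^ N)) * indicator {0..} t \<partial>lborel)"
  proof (intro nn_integral_cong)
    fix t :: real
    have "(1 - exp (- t)) ^ N \<le> 1" if "0 \<le> t" using that by (intro power_le_one) auto
    then show "ennreal (2 * t) * indicator {0..} t * emeasure M {\<omega>\<in>space M. t < X \<omega>}
        = ennreal (2 * t * (1 - (1 - exp (- t)) ^ N)) * indicator {0..} t"
      by (simp add: emeasure_eq_measure X_tail ennreal_mult split: split_indicator)
  qed
  also have "\<dots> = ennreal (\<Sum>k<N. 2 * harm (Suc k) / real (Suc k))"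
    by (rule nn_integral_t_max_exponential_tail)
  finally show "(\<integral>\<^sup>+\<omega>. ennreal ((X \<omega>)\<^sup>2) \<partial>M) = ennreal (\<Sum>k<N. 2 * harm (Suc k) / real (Suc k))" .
qed (auto intro!: sum_nonneg divide_nonneg_nonneg harm_nonneg)

end

end

section \<open>Moment bounds for the estimator\<close>

lemma norm_add_sq_minus_sq_le:
  fixes p q :: "'a::real_inner"
  shows "((norm (p + q))\<^sup>2 - (norm p)\<^sup>2 - (norm q)\<^sup>2)\<^sup>2 \<le> 4 * (norm p)\<^sup>2 * (norm q)\<^sup>2"
proof -
  have "(norm (p + q))\<^sup>2 - (norm p)\<^sup>2 - (norm q)\<^sup>2 = 2 * (p \<bullet> q)"
    by (simp add: power2_norm_eq_inner inner_add_left inner_add_right inner_commute)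
  moreover have "(p \<bullet> q)\<^sup>2 \<le> (norm p)\<^sup>2 * (norm q)\<^sup>2"
    using Cauchy_Schwarz_ineq[of p q] by (simp add: power2_norm_eq_inner)
  ultimately show ?thesis by (simp add: power_mult_distrib)
qed

lemma cmod_sq_mix_cross_term_le:
  fixes \<rho> u v :: complex
  assumes "cmod \<rho> \<le> 1"
  defines "r \<equiv> complex_of_real (sqrt (1 - (cmod \<rho>)\<^sup>2))"
  shows "((cmod (\<rho> * u + r * v))\<^sup>2 - (cmod \<rho>)\<^sup>2 * (cmod u)\<^sup>2 - (1 - (cmod \<rho>)\<^sup>2) * (cmod v)\<^sup>2)\<^sup>2
      \<le> 4 * (cmod u)\<^sup>2 * (cmod v)\<^sup>2"
proof -
  have \<rho>_sq: "(cmod \<rho>)\<^sup>2 \<le> 1" using assms(1) by (simp add: power_le_one)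
  have norms: "(cmod (\<rho> * u))\<^sup>2 = (cmod \<rho>)\<^sup>2 * (cmod u)\<^sup>2"
    "(cmod (r * v))\<^sup>2 = (1 - (cmod \<rho>)\<^sup>2) * (cmod v)\<^sup>2"
    using \<rho>_sq by (simp_all add: r_def norm_mult power_mult_distrib)
  have "(cmod (\<rho> * u))\<^sup>2 * (cmod (r * v))\<^sup>2 \<le> (cmod u)\<^sup>2 * (cmod v)\<^sup>2"
    unfolding norms using \<rho>_sq by (intro mult_mono mult_left_le_one_le) auto
  then show ?thesis
    using norm_add_sq_minus_sq_le[of "\<rho> * u" "r * v"] by (simp add: norms)
qed

lemma abs_le_weighted_sum_if_sq_le:
  fixes c x z s :: real
  assumes "c\<^sup>2 \<le> 4 * x * z" "0 \<le> x" "0 \<le> z" "0 < s"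
  shows "\<bar>c\<bar> \<le> s * x + z / s"
proof -
  have "(s * x + z / s)\<^sup>2 = (s * x - z / s)\<^sup>2 + 4 * x * z"
    using assms(4) by (simp add: power2_eq_square field_simps)
  then have "c\<^sup>2 \<le> (s * x + z / s)\<^sup>2" using assms(1) by (smt (verit) zero_le_power2)
  moreover have "0 \<le> s * x + z / s" using assms(2-4) by simp
  ultimately show ?thesis using abs_le_square_iff[of c "s * x + z / s"] by simp
qed

lemma sq_convex_combination_add_le:
  fixes a p q e :: real
  assumes "0 \<le> a" "a \<le> 1"
  shows "(a * p + (1 - a) * q + e)\<^sup>2 \<le> 3 * (p\<^sup>2 + q\<^sup>2 + e\<^sup>2)"
proof -
  have "(a * p + (1 - a) * q + e)\<^sup>2 \<le> 3 * ((a * p)\<^sup>2 + ((1 - a) * q)\<^sup>2 + e\<^sup>2)"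
    using sum_squares_ge_zero[of "a * p - (1 - a) * q" "(1 - a) * q - e"]
      zero_le_power2[of "a * p - e"]
    by (simp add: power2_eq_square algebra_simps)
  also have "\<dots> \<le> 3 * (p\<^sup>2 + q\<^sup>2 + e\<^sup>2)"
  proof -
    have "a\<^sup>2 \<le> 1" "(1 - a)\<^sup>2 \<le> 1" using assms by (auto intro!: power_le_one)
    then have "a\<^sup>2 * p\<^sup>2 \<le> p\<^sup>2" "(1 - a)\<^sup>2 * q\<^sup>2 \<le> q\<^sup>2"
      by (auto intro!: mult_left_le_one_le)
    then show ?thesis by (simp add: power_mult_distrib)
  qed
  finally show ?thesis .
qed

lemma (in prob_space) integrable_sq_diff:
  fixes f :: "'a \<Rightarrow> real"
  assumes "integrable M f" "integrable M (\<lambda>\<omega>. (f \<omega>)\<^sup>2)"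
  shows "integrable M (\<lambda>\<omega>. (f \<omega> - c)\<^sup>2)"
  using assms by (simp add: power2_diff)

lemma (in prob_space) variance_le_expectation_sq_diff:
  fixes f :: "'a \<Rightarrow> real"
  assumes "integrable M f" "integrable M (\<lambda>\<omega>. (f \<omega>)\<^sup>2)"
  shows "variance f \<le> expectation (\<lambda>\<omega>. (f \<omega> - c)\<^sup>2)"
proof -
  have "expectation (\<lambda>\<omega>. (f \<omega> - c)\<^sup>2) = expectation (\<lambda>\<omega>. (f \<omega>)\<^sup>2) - 2 * c * expectation f + c\<^sup>2"
    using assms by (simp add: power2_diff prob_space)
  moreover have "variance f = expectation (\<lambda>\<omega>. (f \<omega>)\<^sup>2) - (expectation f)\<^sup>2"
    by (rule variance_eq[OF assms])
  moreover have "0 \<le> c\<^sup>2 + (expectation f)\<^sup>2 - 2 * c * expectation f"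
    using zero_le_power2[of "c - expectation f"] by (simp only: power2_diff)
  ultimately show ?thesis by linarith
qed

context prob_space
begin

context
  fixes X Z Y :: "'a \<Rightarrow> real" and H a :: real
  assumes Y_measurable [measurable]: "Y \<in> borel_measurable M"
    and integrable_X: "integrable M X" and integrable_X_sq: "integrable M (\<lambda>\<omega>. (X \<omega>)\<^sup>2)"
    and integrable_Z: "integrable M Z" and integrable_Z_sq: "integrable M (\<lambda>\<omega>. (Z \<omega>)\<^sup>2)"
    and integrable_XZ: "integrable M (\<lambda>\<omega>. X \<omega> * Z \<omega>)"
    and mean_X: "expectation X = H" and moment2_X: "expectation (\<lambda>\<omega>. (X \<omega>)\<^sup>2) \<le> H\<^sup>2 + H"
    and mean_Z: "expectation Z = 1" and moment2_Z: "expectation (\<lambda>\<omega>. (Z \<omega>)\<^sup>2) = 2"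
    and mean_XZ: "expectation (\<lambda>\<omega>. X \<omega> * Z \<omega>) = H"
    and X_nonneg: "\<And>\<omega>. 0 \<le> X \<omega>" and Z_nonneg: "\<And>\<omega>. 0 \<le> Z \<omega>" and H_ge_1: "1 \<le> H"
    and a_nonneg: "0 \<le> a" and a_le_1: "a \<le> 1"
    and cross_term: "\<And>\<omega>. (Y \<omega> - a * X \<omega> - (1 - a) * Z \<omega>)\<^sup>2 \<le> 4 * X \<omega> * Z \<omega>"
begin

lemma integrable_cross_term:
  "integrable M (\<lambda>\<omega>. Y \<omega> - a * X \<omega> - (1 - a) * Z \<omega>)"
  "integrable M (\<lambda>\<omega>. (Y \<omega> - a * X \<omega> - (1 - a) * Z \<omega>)\<^sup>2)"
proof -
  have [measurable]: "X \<in> borel_measurable M" "Z \<in> borel_measurable M"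
    using integrable_X integrable_Z by auto
  show "integrable M (\<lambda>\<omega>. Y \<omega> - a * X \<omega> - (1 - a) * Z \<omega>)"
  proof (rule Bochner_Integration.integrable_bound[where f="\<lambda>\<omega>. X \<omega> + Z \<omega>"])
    show "AE \<omega> in M. norm (Y \<omega> - a * X \<omega> - (1 - a) * Z \<omega>) \<le> norm (X \<omega> + Z \<omega>)"
      using abs_le_weighted_sum_if_sq_le[OF cross_term X_nonneg Z_nonneg, of 1] X_nonneg Z_nonneg
      by simp
  qed (use integrable_X integrable_Z in auto)
  show "integrable M (\<lambda>\<omega>. (Y \<omega> - a * X \<omega> - (1 - a) * Z \<omega>)\<^sup>2)"
  proof (rule Bochner_Integration.integrable_bound[where f="\<lambda>\<omega>. 4 * (X \<omega> * Z \<omega>)"])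
    show "AE \<omega> in M. norm ((Y \<omega> - a * X \<omega> - (1 - a) * Z \<omega>)\<^sup>2) \<le> norm (4 * (X \<omega> * Z \<omega>))"
      using cross_term X_nonneg Z_nonneg by (simp add: mult.assoc)
  qed (use integrable_XZ in auto)
qed

lemma integrable_Y: "integrable M Y" "integrable M (\<lambda>\<omega>. (Y \<omega>)\<^sup>2)"
proof -
  define C where "C \<omega> = Y \<omega> - a * X \<omega> - (1 - a) * Z \<omega>" for \<omega>
  have Y_eq: "Y = (\<lambda>\<omega>. a * X \<omega> + (1 - a) * Z \<omega> + C \<omega>)"
    by (simp add: C_def fun_eq_iff)
  have "integrable M C" using integrable_cross_term(1) by (simp add: C_def[abs_def])
  then have "integrable M (\<lambda>\<omega>. a * X \<omega> + (1 - a) * Z \<omega> + C \<omega>)"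
    using integrable_X integrable_Z by auto
  then show "integrable M Y" by (simp add: Y_eq)
  show "integrable M (\<lambda>\<omega>. (Y \<omega>)\<^sup>2)"
  proof (rule Bochner_Integration.integrable_bound[where f="\<lambda>\<omega>. 3 * ((X \<omega>)\<^sup>2 + (Z \<omega>)\<^sup>2 + (C \<omega>)\<^sup>2)"])
    show "integrable M (\<lambda>\<omega>. 3 * ((X \<omega>)\<^sup>2 + (Z \<omega>)\<^sup>2 + (C \<omega>)\<^sup>2))"
      using integrable_X_sq integrable_Z_sq integrable_cross_term(2) by (simp add: C_def)
    show "AE \<omega> in M. norm ((Y \<omega>)\<^sup>2) \<le> norm (3 * ((X \<omega>)\<^sup>2 + (Z \<omega>)\<^sup>2 + (C \<omega>)\<^sup>2))"
      using sq_convex_combination_add_le[OF a_nonneg a_le_1] by (simp add: Y_eq)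
  qed simp
qed

lemma estimator_mean_bound: "\<bar>expectation (\<lambda>\<omega>. Y \<omega> / H) - a\<bar> \<le> (1 - a) / H + 2 / sqrt H"
proof -
  define C where "C \<omega> = Y \<omega> - a * X \<omega> - (1 - a) * Z \<omega>" for \<omega>
  define s where "s = 1 / sqrt H"
  have H: "0 < H" "0 < sqrt H" "0 < s" using H_ge_1 by (auto simp: s_def)
  have integrable_C: "integrable M C"
    using integrable_cross_term(1) by (simp add: C_def[abs_def])
  \<comment> \<open>AM-GM with the weight \<open>s\<close> that balances \<open>E X = H\<close> against \<open>E Z = 1\<close>.\<close>
  have C_bound: "\<bar>C \<omega>\<bar> \<le> s * X \<omega> + Z \<omega> / s" for \<omega>
    using abs_le_weighted_sum_if_sq_le[OF cross_term X_nonneg Z_nonneg \<open>0 < s\<close>] by (simp add: C_def)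
  have "\<bar>expectation C\<bar> \<le> expectation (\<lambda>\<omega>. \<bar>C \<omega>\<bar>)"
    using integral_norm_bound[of M C] by simp
  also have "\<dots> \<le> expectation (\<lambda>\<omega>. s * X \<omega> + Z \<omega> / s)"
    using integrable_C integrable_X integrable_Z C_bound by (intro integral_mono) auto
  also have "\<dots> = s * H + 1 / s"
    using integrable_X integrable_Z by (simp add: mean_X mean_Z)
  also have "\<dots> = 2 * sqrt H"
    using H by (simp add: s_def real_div_sqrt)
  finally have "\<bar>expectation C\<bar> * sqrt H \<le> 2 * sqrt H * sqrt H"
    using H by (intro mult_right_mono) auto
  also have "\<dots> = 2 * H" using H by simp
  finally have "\<bar>expectation C / H\<bar> \<le> 2 / sqrt H"
    using H by (simp add: field_simps abs_divide)
  moreover have "expectation (\<lambda>\<omega>. Y \<omega> / H) - a = (1 - a) / H + expectation C / H"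
  proof -
    have "expectation C = expectation Y - a * H - (1 - a)"
      using integrable_Y(1) integrable_X integrable_Z by (simp add: C_def[abs_def] mean_X mean_Z)
    then show ?thesis using H by (simp add: field_simps)
  qed
  moreover have "0 \<le> (1 - a) / H" using H a_le_1 by simp
  ultimately show ?thesis by (simp only: abs_le_iff) linarith
qed

lemma estimator_variance_bound: "variance (\<lambda>\<omega>. Y \<omega> / H) \<le> 18 / H"
proof -
  define C where "C \<omega> = Y \<omega> - a * X \<omega> - (1 - a) * Z \<omega>" for \<omega>
  define c where "c = a + (1 - a) / H"
  have H: "0 < H" using H_ge_1 by simp
  have "variance (\<lambda>\<omega>. Y \<omega> / H) \<le> expectation (\<lambda>\<omega>. (Y \<omega> / H - c)\<^sup>2)"
    using integrable_Y by (intro variance_le_expectation_sq_diff) (auto simp: power_divide)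
  also have "\<dots> \<le> expectation (\<lambda>\<omega>. 3 * ((X \<omega> - H)\<^sup>2 + (Z \<omega> - 1)\<^sup>2 + 4 * (X \<omega> * Z \<omega>)) / H\<^sup>2)"
  proof (rule integral_mono)
    show "integrable M (\<lambda>\<omega>. (Y \<omega> / H - c)\<^sup>2)"
      using integrable_Y by (intro integrable_sq_diff) (auto simp: power_divide)
    show "integrable M (\<lambda>\<omega>. 3 * ((X \<omega> - H)\<^sup>2 + (Z \<omega> - 1)\<^sup>2 + 4 * (X \<omega> * Z \<omega>)) / H\<^sup>2)"
      using integrable_sq_diff[OF integrable_X integrable_X_sq] integrable_sq_diff[OF integrable_Z integrable_Z_sq]
        integrable_XZ by auto
    fix \<omega>
    have "Y \<omega> / H - c = (a * (X \<omega> - H) + (1 - a) * (Z \<omega> - 1) + C \<omega>) / H"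
      using H by (simp add: c_def C_def field_simps)
    then have "(Y \<omega> / H - c)\<^sup>2 \<le> 3 * ((X \<omega> - H)\<^sup>2 + (Z \<omega> - 1)\<^sup>2 + (C \<omega>)\<^sup>2) / H\<^sup>2"
      using sq_convex_combination_add_le[OF a_nonneg a_le_1] by (simp add: power_divide divide_right_mono)
    also have "\<dots> \<le> 3 * ((X \<omega> - H)\<^sup>2 + (Z \<omega> - 1)\<^sup>2 + 4 * (X \<omega> * Z \<omega>)) / H\<^sup>2"
      using cross_term[of \<omega>] by (simp add: C_def divide_right_mono mult.assoc)
    finally show "(Y \<omega> / H - c)\<^sup>2 \<le> 3 * ((X \<omega> - H)\<^sup>2 + (Z \<omega> - 1)\<^sup>2 + 4 * (X \<omega> * Z \<omega>)) / H\<^sup>2" .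
  qed
  also have "\<dots> = 3 * (variance X + variance Z + 4 * H) / H\<^sup>2"
    using integrable_sq_diff[OF integrable_X integrable_X_sq] integrable_sq_diff[OF integrable_Z integrable_Z_sq]
      integrable_XZ by (simp add: mean_X mean_Z mean_XZ)
  also have "\<dots> \<le> 3 * (H + 1 + 4 * H) / H\<^sup>2"
    using variance_eq[OF integrable_X integrable_X_sq] variance_eq[OF integrable_Z integrable_Z_sq]
      moment2_X H by (intro divide_right_mono mult_left_mono add_mono) (auto simp: mean_X mean_Z moment2_Z)
  also have "\<dots> \<le> 18 / H"
    using H_ge_1 by (simp add: field_simps power2_eq_square)
  finally show ?thesis .
qed

end

end

section \<open>The MMIE model\<close>

lemma (in prob_space) integral_indep_selection:
  fixes U :: "'a \<Rightarrow> real" and J :: "'a \<Rightarrow> nat" and W :: "nat \<Rightarrow> 'a \<Rightarrow> real"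
  assumes J_less: "\<And>\<omega>. J \<omega> < N"
    and indep: "\<And>n. n < N \<Longrightarrow> indep_var borel (\<lambda>\<omega>. if J \<omega> = n then U \<omega> else 0) borel (W n)"
    and int_U: "integrable M U"
    and int_W: "\<And>n. n < N \<Longrightarrow> integrable M (W n)"
    and mean_W: "\<And>n. n < N \<Longrightarrow> expectation (W n) = c"
  shows "integrable M (\<lambda>\<omega>. U \<omega> * W (J \<omega>) \<omega>)"
    and "expectation (\<lambda>\<omega>. U \<omega> * W (J \<omega>) \<omega>) = c * expectation U"
proof -
  define G where "G n \<omega> = (if J \<omega> = n then U \<omega> else 0)" for n \<omega>
  have split_U: "U \<omega> = (\<Sum>n<N. G n \<omega>)" for \<omega>
    using J_less[of \<omega>] by (simp add: G_def)
  have split_UW: "U \<omega> * W (J \<omega>) \<omega> = (\<Sum>n<N. G n \<omega> * W n \<omega>)" for \<omega>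
    using J_less[of \<omega>] by (simp add: G_def if_distrib[of "\<lambda>x. x * _"] cong: if_cong)
  have summand: "integrable M (G n)" "integrable M (\<lambda>\<omega>. G n \<omega> * W n \<omega>)"
    "expectation (\<lambda>\<omega>. G n \<omega> * W n \<omega>) = c * expectation (G n)" if "n < N" for n
  proof -
    have "indep_var borel (G n) borel (W n)"
      using indep[OF that] by (simp add: G_def[abs_def])
    moreover have "integrable M (G n)"
      using indep_var_rv1[OF calculation] by (intro Bochner_Integration.integrable_bound[OF int_U]) (auto simp: G_def)
    ultimately show "integrable M (G n)" "integrable M (\<lambda>\<omega>. G n \<omega> * W n \<omega>)"
      "expectation (\<lambda>\<omega>. G n \<omega> * W n \<omega>) = c * expectation (G n)"
      using indep_var_integrable indep_var_lebesgue_integral int_W[OF that] mean_W[OF that]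
      by (auto simp: mult.commute)
  qed
  show "integrable M (\<lambda>\<omega>. U \<omega> * W (J \<omega>) \<omega>)"
    unfolding split_UW by (auto intro: summand)
  have "expectation (\<lambda>\<omega>. U \<omega> * W (J \<omega>) \<omega>) = (\<Sum>n<N. c * expectation (G n))"
    unfolding split_UW by (subst Bochner_Integration.integral_sum) (auto simp: summand intro!: sum.cong)
  also have "\<dots> = c * expectation (\<lambda>\<omega>. \<Sum>n<N. G n \<omega>)"
    by (subst Bochner_Integration.integral_sum) (auto simp: sum_distrib_left summand)
  also have "\<dots> = c * expectation U"
    by (simp flip: split_U)
  finally show "expectation (\<lambda>\<omega>. U \<omega> * W (J \<omega>) \<omega>) = c * expectation U" .
qed

locale mmie_model = prob_space M for M :: "'a measure" +
  fixes x z y :: "nat \<Rightarrow> 'a \<Rightarrow> complex" and \<rho> :: complex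
  assumes indep: "indep_vars (\<lambda>_. borel) (\<lambda>i. case i of Inl n \<Rightarrow> x n | Inr n \<Rightarrow> z n) UNIV"
    and x_CN: "\<And>n. distributed M lborel (x n) (\<lambda>w. ennreal (cn_density w))"
    and z_CN: "\<And>n. distributed M lborel (z n) (\<lambda>w. ennreal (cn_density w))"
    and rho_le: "cmod \<rho> \<le> 1"
    and y_def: "\<And>n \<omega>. y n \<omega> = \<rho> * x n \<omega> + complex_of_real (sqrt (1 - (cmod \<rho>)\<^sup>2)) * z n \<omega>"
begin

abbreviation xz :: "nat + nat \<Rightarrow> 'a \<Rightarrow> complex" where
  "xz \<equiv> \<lambda>i. case i of Inl n \<Rightarrow> x n | Inr n \<Rightarrow> z n"

lemma measurable_x [measurable]: "x n \<in> borel_measurable M"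
  and measurable_z [measurable]: "z n \<in> borel_measurable M"
  using distributed_measurable[OF x_CN] distributed_measurable[OF z_CN] by simp_all

lemma measurable_y [measurable]: "y n \<in> borel_measurable M"
  by (simp add: y_def[abs_def])

lemma measurable_argmax_idx: "(\<lambda>\<omega>. argmax_idx x N \<omega>) \<in> measurable M (count_space UNIV)"
  unfolding argmax_idx_def by (rule measurable_arg_max_lessThan) simp

lemma norm_sq_x_argmax_eq_Max:
  assumes N: "0 < N"
  shows "(cmod (x (argmax_idx x N \<omega>) \<omega>))\<^sup>2 = Max ((\<lambda>i. (cmod (xz i \<omega>))\<^sup>2) ` Inl ` {..<N})"
proof -
  have J: "argmax_idx x N \<omega> < N"
    "\<And>m. m < N \<Longrightarrow> (cmod (x m \<omega>))\<^sup>2 \<le> (cmod (x (argmax_idx x N \<omega>) \<omega>))\<^sup>2"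
    using arg_max_lessThan[OF N, where f="\<lambda>n. (cmod (x n \<omega>))\<^sup>2"] by (simp_all add: argmax_idx_def)
  have "(\<lambda>i. (cmod (xz i \<omega>))\<^sup>2) ` Inl ` {..<N} = (\<lambda>n. (cmod (x n \<omega>))\<^sup>2) ` {..<N}"
    by (simp add: image_image)
  then show ?thesis using J by (intro Max_eqI[symmetric]) auto
qed

lemma prob_norm_sq_x_argmax_greater:
  assumes N: "0 < N" and t: "0 \<le> t"
  shows "prob {\<omega>\<in>space M. t < (cmod (x (argmax_idx x N \<omega>) \<omega>))\<^sup>2} = 1 - (1 - exp (- t)) ^ N"
proof -
  define I :: "(nat + nat) set" where "I = Inl ` {..<N}"
  have indep_I: "indep_vars (\<lambda>_. borel) (\<lambda>i \<omega>. (cmod (xz i \<omega>))\<^sup>2) I"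
    by (rule indep_vars_subset[OF indep_vars_compose2[OF indep]]) auto
  have exponential_I: "distributed M lborel (\<lambda>\<omega>. (cmod (xz i \<omega>))\<^sup>2) (exponential_density 1)"
    if "i \<in> I" for i
    using that distributed_cn_norm_sq[OF x_CN] by (auto simp: I_def)
  have I: "finite I" "I \<noteq> {}" "card I = N"
    using N by (auto simp: I_def card_image)
  show ?thesis
    using prob_Max_exponential_greater[OF indep_I I(1,2) exponential_I t]
    by (simp add: norm_sq_x_argmax_eq_Max[OF N] I_def[symmetric] I(3))
qed

lemma indep_x_block_z:
  assumes [measurable]: "g \<in> borel_measurable (Pi\<^sub>M (Inl ` {..<N}) (\<lambda>_. borel))"
    and [measurable]: "h \<in> borel_measurable borel"
  shows "indep_var borel (\<lambda>\<omega>. g (\<lambda>i\<in>Inl ` {..<N}. xz i \<omega>)) borel (\<lambda>\<omega>. h (z n \<omega>))"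
proof -
  have "indep_var (Pi\<^sub>M (Inl ` {..<N}) (\<lambda>_. borel)) (\<lambda>\<omega>. \<lambda>i\<in>Inl ` {..<N}. xz i \<omega>)
      (Pi\<^sub>M {Inr n} (\<lambda>_. borel)) (\<lambda>\<omega>. \<lambda>i\<in>{Inr n}. xz i \<omega>)"
    by (rule indep_var_restrict[OF indep]) auto
  moreover have "(\<lambda>f. h (f (Inr n))) \<in> borel_measurable (Pi\<^sub>M {Inr n} (\<lambda>_. borel))"
    by measurable
  ultimately have "indep_var borel (g \<circ> (\<lambda>\<omega>. \<lambda>i\<in>Inl ` {..<N}. xz i \<omega>))
      borel ((\<lambda>f. h (f (Inr n))) \<circ> (\<lambda>\<omega>. \<lambda>i\<in>{Inr n}. xz i \<omega>))"
    by (intro indep_var_compose) auto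
  then show ?thesis by (simp add: comp_def)
qed

lemma integral_argmax_selection:
  assumes N: "0 < N"
    and [measurable]: "u \<in> borel_measurable (Pi\<^sub>M (Inl ` {..<N}) (\<lambda>_. borel))"
    and integrable_u: "integrable M (\<lambda>\<omega>. u (\<lambda>i\<in>Inl ` {..<N}. xz i \<omega>))"
  shows "integrable M (\<lambda>\<omega>. u (\<lambda>i\<in>Inl ` {..<N}. xz i \<omega>) * ((cmod (z (argmax_idx x N \<omega>) \<omega>))\<^sup>2) ^ k)"
    and "expectation (\<lambda>\<omega>. u (\<lambda>i\<in>Inl ` {..<N}. xz i \<omega>) * ((cmod (z (argmax_idx x N \<omega>) \<omega>))\<^sup>2) ^ k)
      = fact k * expectation (\<lambda>\<omega>. u (\<lambda>i\<in>Inl ` {..<N}. xz i \<omega>))"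
proof -
  define B :: "(nat + nat \<Rightarrow> complex) measure" where "B = Pi\<^sub>M (Inl ` {..<N}) (\<lambda>_. borel)"
  define F where "F \<omega> = (\<lambda>i\<in>Inl ` {..<N}. xz i \<omega>)" for \<omega>
  define j where "j f = (ARG_MAX (\<lambda>m. if m < N then (cmod (f (Inl m)))\<^sup>2 else 0) m. m < N)"
    for f :: "nat + nat \<Rightarrow> complex"
  have "j \<in> measurable B (count_space UNIV)"
    unfolding j_def[abs_def]
  proof (rule measurable_arg_max_lessThan)
    fix m :: nat
    show "(\<lambda>f. if m < N then (cmod (f (Inl m)))\<^sup>2 else 0) \<in> borel_measurable B"
    proof (cases "m < N")
      case True
      then have [measurable]: "(\<lambda>f. f (Inl m)) \<in> measurable B borel"
        unfolding B_def by (intro measurable_component_singleton) auto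
      show ?thesis using True by measurable
    qed simp
  qed
  then have indep_n: "indep_var borel (\<lambda>\<omega>. if j (F \<omega>) = n then u (F \<omega>) else 0) borel
      (\<lambda>\<omega>. ((cmod (z n \<omega>))\<^sup>2) ^ k)" for n
    unfolding F_def B_def by (intro indep_x_block_z[where g="\<lambda>f. if j f = n then u f else 0"]) auto
  have j_F: "j (\<lambda>i\<in>Inl ` {..<N}. xz i \<omega>) = argmax_idx x N \<omega>" for \<omega>
    unfolding j_def argmax_idx_def by (rule arg_max_lessThan_cong) simp
  have J_less: "j (F \<omega>) < N" for \<omega>
    unfolding j_def by (rule arg_max_lessThan(1)[OF N])
  have W: "distributed M lborel (\<lambda>\<omega>. (cmod (z n \<omega>))\<^sup>2) (exponential_density 1)" for n
    by (rule distributed_cn_norm_sq[OF z_CN])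
  have W_moments: "integrable M (\<lambda>\<omega>. ((cmod (z n \<omega>))\<^sup>2) ^ k)"
    "expectation (\<lambda>\<omega>. ((cmod (z n \<omega>))\<^sup>2) ^ k) = fact k" for n
    using erlang_ith_moment_integrable[OF _ W] erlang_ith_moment[OF _ W] by simp_all
  from integral_indep_selection[where J="\<lambda>\<omega>. j (F \<omega>)", OF J_less indep_n _ W_moments] integrable_u
  show "integrable M (\<lambda>\<omega>. u (\<lambda>i\<in>Inl ` {..<N}. xz i \<omega>) * ((cmod (z (argmax_idx x N \<omega>) \<omega>))\<^sup>2) ^ k)"
    and "expectation (\<lambda>\<omega>. u (\<lambda>i\<in>Inl ` {..<N}. xz i \<omega>) * ((cmod (z (argmax_idx x N \<omega>) \<omega>))\<^sup>2) ^ k)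
      = fact k * expectation (\<lambda>\<omega>. u (\<lambda>i\<in>Inl ` {..<N}. xz i \<omega>))"
    by (simp_all add: F_def j_F)
qed

lemma norm_sq_x_argmax_moments:
  assumes N: "0 < N"
  defines "X \<equiv> \<lambda>\<omega>. (cmod (x (argmax_idx x N \<omega>) \<omega>))\<^sup>2"
  shows "integrable M X" "expectation X = harm N"
    and "integrable M (\<lambda>\<omega>. (X \<omega>)\<^sup>2)" "expectation (\<lambda>\<omega>. (X \<omega>)\<^sup>2) \<le> (harm N)\<^sup>2 + harm N"
proof -
  have X_measurable: "X \<in> borel_measurable M"
    unfolding X_def by (rule measurable_compose_countable[OF _ measurable_argmax_idx]) simp
  have X_nonneg: "0 \<le> X \<omega>" for \<omega>
    by (simp add: X_def)
  have X_tail: "prob {\<omega>\<in>space M. t < X \<omega>} = 1 - (1 - exp (- t)) ^ N" if "0 \<le> t" for t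
    using prob_norm_sq_x_argmax_greater[OF N that] by (simp add: X_def)
  show "integrable M X" "expectation X = harm N"
    using has_bochner_integral_max_exponential[OF X_measurable X_nonneg X_tail]
    by (auto intro: integrable.intros dest: has_bochner_integral_integral_eq)
  show "integrable M (\<lambda>\<omega>. (X \<omega>)\<^sup>2)" "expectation (\<lambda>\<omega>. (X \<omega>)\<^sup>2) \<le> (harm N)\<^sup>2 + harm N"
    using has_bochner_integral_sq_max_exponential[OF X_measurable X_nonneg X_tail] sum_harm_div_le[of N]
    by (auto intro: integrable.intros dest: has_bochner_integral_integral_eq)
qed

lemma selected_noise_moments:
  assumes N: "0 < N"
  defines "X \<equiv> \<lambda>\<omega>. (cmod (x (argmax_idx x N \<omega>) \<omega>))\<^sup>2"
    and "Z \<equiv> \<lambda>\<omega>. (cmod (z (argmax_idx x N \<omega>) \<omega>))\<^sup>2"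
  shows "integrable M Z" "expectation Z = 1"
    and "integrable M (\<lambda>\<omega>. (Z \<omega>)\<^sup>2)" "expectation (\<lambda>\<omega>. (Z \<omega>)\<^sup>2) = 2"
    and "integrable M (\<lambda>\<omega>. X \<omega> * Z \<omega>)" "expectation (\<lambda>\<omega>. X \<omega> * Z \<omega>) = expectation X"
proof -
  define u where "u f = Max ((\<lambda>i. (cmod (f i))\<^sup>2) ` Inl ` {..<N})" for f :: "nat + nat \<Rightarrow> complex"
  have u_measurable: "u \<in> borel_measurable (Pi\<^sub>M (Inl ` {..<N}) (\<lambda>_. borel))"
    unfolding u_def[abs_def]
  proof (rule borel_measurable_Max)
    fix i assume "i \<in> Inl ` {..<N}"
    then have [measurable]: "(\<lambda>f. f i) \<in> measurable (Pi\<^sub>M (Inl ` {..<N}) (\<lambda>_. borel)) borel"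
      by (rule measurable_component_singleton)
    show "(\<lambda>f. (cmod (f i))\<^sup>2) \<in> borel_measurable (Pi\<^sub>M (Inl ` {..<N}) (\<lambda>_. borel :: complex measure))"
      by measurable
  qed simp
  have X_u: "X = (\<lambda>\<omega>. u (\<lambda>i\<in>Inl ` {..<N}. xz i \<omega>))"
    unfolding X_def u_def norm_sq_x_argmax_eq_Max[OF N] by (intro ext arg_cong[where f=Max] image_cong) auto
  have one: "(\<lambda>_. 1) \<in> borel_measurable (Pi\<^sub>M (Inl ` {..<N}) (\<lambda>_. borel :: complex measure))"
    "integrable M (\<lambda>\<omega>. (\<lambda>_. 1 :: real) (\<lambda>i\<in>Inl ` {..<N}. xz i \<omega>))"
    by simp_all
  show "integrable M Z" "expectation Z = 1"
    using integral_argmax_selection[OF N one, of 1] unfolding Z_def by (simp_all add: prob_space)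
  show "integrable M (\<lambda>\<omega>. (Z \<omega>)\<^sup>2)" "expectation (\<lambda>\<omega>. (Z \<omega>)\<^sup>2) = 2"
    using integral_argmax_selection[OF N one, of 2] unfolding Z_def by (simp_all add: prob_space numeral_2_eq_2)
  have "integrable M (\<lambda>\<omega>. u (\<lambda>i\<in>Inl ` {..<N}. xz i \<omega>))"
    using norm_sq_x_argmax_moments(1)[OF N] unfolding X_def[symmetric] X_u .
  from integral_argmax_selection[OF N u_measurable this, of 1]
  show "integrable M (\<lambda>\<omega>. X \<omega> * Z \<omega>)" "expectation (\<lambda>\<omega>. X \<omega> * Z \<omega>) = expectation X"
    unfolding Z_def X_u by (simp_all only: power_one_right fact_1 mult_1)
qed

lemma mmie_est_bounds:
  assumes N: "0 < N"
  shows "\<bar>(\<integral>\<omega>. mmie_est M x y N \<omega> \<partial>M) - (cmod \<rho>)\<^sup>2\<bar> \<le> (1 - (cmod \<rho>)\<^sup>2) / harm N + 2 / sqrt (harm N)"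
    and "var M (mmie_est M x y N) \<le> 18 / harm N"
proof -
  define X where "X \<omega> = (cmod (x (argmax_idx x N \<omega>) \<omega>))\<^sup>2" for \<omega>
  define Z where "Z \<omega> = (cmod (z (argmax_idx x N \<omega>) \<omega>))\<^sup>2" for \<omega>
  define Y where "Y \<omega> = (cmod (y (argmax_idx x N \<omega>) \<omega>))\<^sup>2" for \<omega>
  have Y_measurable: "Y \<in> borel_measurable M"
    unfolding Y_def by (rule measurable_compose_countable[OF _ measurable_argmax_idx]) simp
  note X_moments = norm_sq_x_argmax_moments[OF N, folded X_def]
  note Z_moments = selected_noise_moments[OF N, folded X_def Z_def]
  have cross_term: "(Y \<omega> - (cmod \<rho>)\<^sup>2 * X \<omega> - (1 - (cmod \<rho>)\<^sup>2) * Z \<omega>)\<^sup>2 \<le> 4 * X \<omega> * Z \<omega>" for \<omega>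
    using cmod_sq_mix_cross_term_le[OF rho_le, of "x (argmax_idx x N \<omega>) \<omega>" "z (argmax_idx x N \<omega>) \<omega>"]
    by (simp add: X_def Y_def Z_def y_def)
  have nonneg: "0 \<le> X \<omega>" "0 \<le> Z \<omega>" for \<omega>
    by (simp_all add: X_def Z_def)
  have H_ge_1: "1 \<le> (harm N :: real)"
    using harm_mono[of 1 N, where 'a=real] N by (simp add: harm_expand)
  have \<rho>: "0 \<le> (cmod \<rho>)\<^sup>2" "(cmod \<rho>)\<^sup>2 \<le> 1"
    using rho_le by (auto intro: power_le_one)
  note bounds = estimator_mean_bound estimator_variance_bound
  note bounds = bounds[OF Y_measurable X_moments(1,3) Z_moments(1,3,5) X_moments(2,4) Z_moments(2,4)
      Z_moments(6)[unfolded X_moments(2)] nonneg H_ge_1 \<rho> cross_term]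
  have "mmie_est M x y N = (\<lambda>\<omega>. Y \<omega> / harm N)"
    using X_moments(2) by (simp add: fun_eq_iff mmie_est_def X_def Y_def)
  then show "\<bar>(\<integral>\<omega>. mmie_est M x y N \<omega> \<partial>M) - (cmod \<rho>)\<^sup>2\<bar> \<le> (1 - (cmod \<rho>)\<^sup>2) / harm N + 2 / sqrt (harm N)"
    and "var M (mmie_est M x y N) \<le> 18 / harm N"
    using bounds by (simp_all add: var_def)
qed

end

section \<open>Asymptotics\<close>

lemma tendsto_of_harm_error_bound:
  fixes f :: "nat \<Rightarrow> real"
  assumes "\<And>N. 0 < N \<Longrightarrow> \<bar>f N - l\<bar> \<le> c / harm N + d / sqrt (harm N)"
  shows "f \<longlonglongrightarrow> l"
proof -
  have "(\<lambda>N. inverse (harm N :: real)) \<longlonglongrightarrow> 0"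
    by (rule tendsto_inverse_0_at_top[OF harm_at_top])
  moreover have "(\<lambda>N. inverse (sqrt (harm N :: real))) \<longlonglongrightarrow> 0"
    by (rule tendsto_inverse_0_at_top[OF filterlim_compose[OF sqrt_at_top harm_at_top]])
  ultimately have "(\<lambda>N. c * inverse (harm N :: real) + d * inverse (sqrt (harm N))) \<longlonglongrightarrow> c * 0 + d * 0"
    by (intro tendsto_add tendsto_mult tendsto_const)
  then have bound_to_0: "(\<lambda>N. c / harm N + d / sqrt (harm N :: real)) \<longlonglongrightarrow> 0"
    by (simp add: divide_inverse)
  have "eventually (\<lambda>N. norm (f N - l) \<le> c / harm N + d / sqrt (harm N)) sequentially"
    using eventually_gt_at_top[of "0::nat"] by eventually_elim (use assms in simp)
  from this bound_to_0 have "(\<lambda>N. f N - l) \<longlonglongrightarrow> 0"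
    by (rule Lim_null_comparison)
  then show ?thesis by (rule LIM_zero_cancel)
qed

lemma inverse_harm_power2_bigo: "(\<lambda>k. 1 / harm (2 ^ k) :: real) \<in> O(\<lambda>k. 1 / real k)"
proof (rule bigoI[where c="1 / ln 2"])
  show "eventually (\<lambda>k. norm (1 / harm (2 ^ k) :: real) \<le> 1 / ln 2 * norm (1 / real k)) sequentially"
    using eventually_gt_at_top[of "0::nat"]
  proof eventually_elim
    case (elim k)
    have "real k * ln 2 = ln (2 ^ k :: real)" by (simp add: ln_realpow)
    also have "\<dots> \<le> ln (real (2 ^ k) + 1)" by (subst ln_le_cancel_iff) (auto simp: add_pos_pos)
    also have "\<dots> \<le> harm (2 ^ k)" by (rule ln_le_harm)
    finally have "1 / harm (2 ^ k) \<le> 1 / (real k * ln 2)"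
      using elim by (intro divide_left_mono) auto
    then show ?case by (simp add: mult.commute)
  qed
qed

theorem lemma1:
  fixes M :: "'a measure"
    and x z y :: "nat \<Rightarrow> 'a \<Rightarrow> complex"
    and \<rho> :: complex
  assumes "prob_space M"
    and indep: "prob_space.indep_vars M (\<lambda>_. borel)
                  (\<lambda>i. case i of Inl n \<Rightarrow> x n | Inr n \<Rightarrow> z n) UNIV"
    and x_CN: "\<And>n. distributed M lborel (x n) (\<lambda>w. ennreal (cn_density w))"
    and z_CN: "\<And>n. distributed M lborel (z n) (\<lambda>w. ennreal (cn_density w))"
    and rho_pos: "0 < cmod \<rho>" and rho_le: "cmod \<rho> \<le> 1"
    and y_def: "\<And>n \<omega>. y n \<omega> = \<rho> * x n \<omega> + complex_of_real (sqrt (1 - (cmod \<rho>)\<^sup>2)) * z n \<omega>"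
  shows "(\<lambda>N. \<integral>\<omega>. mmie_est M x y N \<omega> \<partial>M) \<longlonglongrightarrow> (cmod \<rho>)\<^sup>2
       \<and> (\<lambda>N. var M (mmie_est M x y N)) \<in> O[sequentially](\<lambda>N. 1 / harm N)
       \<and> (\<lambda>k. var M (mmie_est M x y (2 ^ k))) \<in> O[sequentially](\<lambda>k. 1 / real k)"
proof -
  interpret mmie_model M x z y \<rho>
    using assms(1) indep x_CN z_CN rho_le y_def by (simp add: mmie_model_def mmie_model_axioms_def)
  have mean_limit: "(\<lambda>N. \<integral>\<omega>. mmie_est M x y N \<omega> \<partial>M) \<longlonglongrightarrow> (cmod \<rho>)\<^sup>2"
    by (rule tendsto_of_harm_error_bound) (rule mmie_est_bounds(1))
  have variance_bigo: "(\<lambda>N. var M (mmie_est M x y N)) \<in> O(\<lambda>N. 1 / harm N)"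
  proof (rule bigoI[where c=18])
    show "eventually (\<lambda>N. norm (var M (mmie_est M x y N)) \<le> 18 * norm (1 / harm N :: real)) sequentially"
      using eventually_gt_at_top[of "0::nat"]
      by eventually_elim (use mmie_est_bounds(2) in \<open>simp add: var_def variance_positive\<close>)
  qed
  have "filterlim (\<lambda>k. 2 ^ k :: nat) at_top at_top"
    by (rule filterlim_subseq) (simp add: strict_mono_def)
  from landau_o.big.compose[OF variance_bigo this] inverse_harm_power2_bigo
  have "(\<lambda>k. var M (mmie_est M x y (2 ^ k))) \<in> O(\<lambda>k. 1 / real k)"
    by (rule landau_o.big_trans)
  with mean_limit variance_bigo show ?thesis by blast
qed

end
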